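(* Let $\mathcal{H}$ be a complex Hilbert space, let $A\in\mathcal{B}(\mathcal{H})$ be a nonzero positive operator, and let $\mathbb{A}=\begin{pmatrix}A&O\\O&A\end{pmatrix}$ on $\mathcal{H}\oplus\mathcal{H}$. Let $P,Q,R,S\in\mathcal{B}_{A^{1/2}}(\mathcal{H})$. Then $$\omega_{\mathbb{A}}\left[\begin{pmatrix}P&Q\\R&S\end{pmatrix}\right]\leq\max\{\omega_A(P),\omega_A(S)\}+\frac{\omega_A(Q+R)+\omega_A(Q-R)}{2}.$$
   Context: For a positive operator $A$ on $\mathcal{H}$, $\langle x,y\rangle_A:=\langle Ax,y\rangle$ and $\|x\|_A:=\sqrt{\langle x,x\rangle_A}$. $\mathcal{B}_{A^{1/2}}(\mathcal{H})$ is the set of $T\in\mathcal{B}(\mathcal{H})$ such that $\|Tx\|_A\le\lambda\|x\|_A$ for some $\lambda>0$ and all $x$. $\omega_A(T):=\sup\{|\langle Tx,x\rangle_A|:x\in\mathcal{H},\|x\|_A=1\}$. $\omega_{\mathbb{A}}$ is defined analogously on $\mathcal{H}\oplus\mathcal{H}$ with $\langle (x_1,x_2),(y_1,y_2)\rangle_{\mathbb{A}}=\langle x_1,y_1\rangle_A+\langle x_2,y_2\rangle_A$. *)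

theory Defs
  imports "HOL-Analysis.Analysis"
begin

text \<open>The library only has
real inner product spaces, so we axiomatize the complex structure as a type class on top of
a real normed vector space: a complex scalar multiplication compatible with the real one,
and a sesquilinear inner product (linear in the first argument, conjugate-symmetric,
positive definite) that induces the norm.  A complex Hilbert space is a type of sort
complex_inner that is moreover a complete_space.\<close>

class complex_inner = real_normed_vector +
  fixes scaleC :: "complex \<Rightarrow> 'a \<Rightarrow> 'a"
  fixes cinner :: "'a \<Rightarrow> 'a \<Rightarrow> complex"
  assumes scaleC_add_right: "scaleC a (x + y) = scaleC a x + scaleC a y"
    and scaleC_add_left: "scaleC (a + b) x = scaleC a x + scaleC b x"
    and scaleC_scaleC: "scaleC a (scaleC b x) = scaleC (a * b) x"
    and scaleC_one: "scaleC 1 x = x"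
    and scaleC_of_real: "scaleC (complex_of_real r) x = scaleR r x"
    and cinner_conj_commute: "cinner y x = cnj (cinner x y)"
    and cinner_add_left: "cinner (x + y) z = cinner x z + cinner y z"
    and cinner_scaleC_left: "cinner (scaleC a x) y = a * cinner x y"
    and cinner_self_nonneg: "0 \<le> Re (cinner x x)"
    and cinner_self_eq_zero: "cinner x x = 0 \<longleftrightarrow> x = 0"
    and norm_eq_sqrt_cinner: "norm x = sqrt (Re (cinner x x))"

definition bounded_clinear :: "('a::complex_inner \<Rightarrow> 'a) \<Rightarrow> bool" where
  "bounded_clinear T \<longleftrightarrow>
     (\<forall>x y. T (x + y) = T x + T y) \<and> (\<forall>c x. T (scaleC c x) = scaleC c (T x)) \<and>
     (\<exists>K. \<forall>x. norm (T x) \<le> norm x * K)"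

definition positive_op :: "('a::complex_inner \<Rightarrow> 'a) \<Rightarrow> bool" where
  "positive_op A \<longleftrightarrow> bounded_clinear A \<and>
     (\<forall>x. Im (cinner (A x) x) = 0 \<and> 0 \<le> Re (cinner (A x) x))"

definition A_inner :: "('a::complex_inner \<Rightarrow> 'a) \<Rightarrow> 'a \<Rightarrow> 'a \<Rightarrow> complex" where
  "A_inner A x y = cinner (A x) y"

definition A_norm :: "('a::complex_inner \<Rightarrow> 'a) \<Rightarrow> 'a \<Rightarrow> real" where
  "A_norm A x = sqrt (Re (A_inner A x x))"

definition B_A_half :: "('a::complex_inner \<Rightarrow> 'a) \<Rightarrow> ('a \<Rightarrow> 'a) set" where
  "B_A_half A = {T. bounded_clinear T \<and>
      (\<exists>c>0. \<forall>x. A_norm A (T x) \<le> c * A_norm A x)}"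

definition omega_A :: "('a::complex_inner \<Rightarrow> 'a) \<Rightarrow> ('a \<Rightarrow> 'a) \<Rightarrow> real" where
  "omega_A A T = Sup {cmod (A_inner A (T x) x) | x. A_norm A x = 1}"

text \<open>The space H \<oplus> H is modelled as the product type; \<open>\<bbA> = diag(A,A)\<close> induces
  \<open>\<langle>(x1,x2),(y1,y2)\<rangle>_\<bbA> = \<langle>x1,y1\<rangle>_A + \<langle>x2,y2\<rangle>_A\<close>.\<close>
definition AA_inner :: "('a::complex_inner \<Rightarrow> 'a) \<Rightarrow> 'a \<times> 'a \<Rightarrow> 'a \<times> 'a \<Rightarrow> complex" where
  "AA_inner A x y = A_inner A (fst x) (fst y) + A_inner A (snd x) (snd y)"

definition AA_norm :: "('a::complex_inner \<Rightarrow> 'a) \<Rightarrow> 'a \<times> 'a \<Rightarrow> real" where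
  "AA_norm A x = sqrt (Re (AA_inner A x x))"

definition omega_AA :: "('a::complex_inner \<Rightarrow> 'a) \<Rightarrow> ('a \<times> 'a \<Rightarrow> 'a \<times> 'a) \<Rightarrow> real" where
  "omega_AA A T = Sup {cmod (AA_inner A (T x) x) | x. AA_norm A x = 1}"

definition block_op :: "('a::complex_inner \<Rightarrow> 'a) \<Rightarrow> ('a \<Rightarrow> 'a) \<Rightarrow> ('a \<Rightarrow> 'a) \<Rightarrow> ('a \<Rightarrow> 'a)
    \<Rightarrow> 'a \<times> 'a \<Rightarrow> 'a \<times> 'a" where
  "block_op P Q R S x = (P (fst x) + Q (snd x), R (fst x) + S (snd x))"

end

theory Submission
  imports Defs
begin

text \<open>At a vector \<open>(u, v)\<close> the \<open>\<bbA>\<close>-form of the block operator splits into the diagonal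
part \<open>\<langle>Pu,u\<rangle>\<^sub>A + \<langle>Sv,v\<rangle>\<^sub>A\<close>, bounded by \<open>max (\<omega>\<^sub>A P) (\<omega>\<^sub>A S) (\<parallel>u\<parallel>\<^sub>A\<^sup>2 + \<parallel>v\<parallel>\<^sub>A\<^sup>2)\<close>, and the
off-diagonal part \<open>\<langle>Qv,u\<rangle>\<^sub>A + \<langle>Ru,v\<rangle>\<^sub>A\<close>. By polarization, four times the latter is
\<open>\<langle>(Q+R)w,w\<rangle>\<^sub>A\<close> at \<open>w = u + v\<close> minus its value at \<open>w = u - v\<close>, minus \<open>\<i>\<close> times the
analogous difference for \<open>Q - R\<close> at \<open>w = u \<plusminus> \<i>v\<close>. Bounding each term by the numerical
radius times \<open>\<parallel>w\<parallel>\<^sub>A\<^sup>2\<close> and applying the parallelogram law to both pairs bounds the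
off-diagonal part by \<open>(\<omega>\<^sub>A(Q+R) + \<omega>\<^sub>A(Q-R))/2 (\<parallel>u\<parallel>\<^sub>A\<^sup>2 + \<parallel>v\<parallel>\<^sub>A\<^sup>2)\<close>.\<close>

lemma scaleC_zero_right [simp]: "scaleC a (0::'a::complex_inner) = 0"
  by (metis add_cancel_right_right add_0 scaleC_add_right)

lemma scaleC_minus_right: "scaleC a (- x::'a::complex_inner) = - scaleC a x"
  by (metis add.right_inverse add_eq_0_iff scaleC_add_right scaleC_zero_right)

lemma scaleC_diff_right: "scaleC a (x - y::'a::complex_inner) = scaleC a x - scaleC a y"
  by (metis diff_conv_add_uminus scaleC_add_right scaleC_minus_right)

lemma cinner_add_right: "cinner (x::'a::complex_inner) (y + z) = cinner x y + cinner x z"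
  by (metis cinner_add_left cinner_conj_commute complex_cnj_add)

lemma cinner_diff_left: "cinner (x - y::'a::complex_inner) z = cinner x z - cinner y z"
  by (metis add_diff_cancel_right' cinner_add_left diff_add_cancel)

lemma cinner_diff_right: "cinner (x::'a::complex_inner) (y - z) = cinner x y - cinner x z"
  by (metis add_diff_cancel_right' cinner_add_right diff_add_cancel)

lemma cinner_scaleC_right: "cinner (x::'a::complex_inner) (scaleC a y) = cnj a * cinner x y"
  by (metis cinner_scaleC_left cinner_conj_commute complex_cnj_mult)

definition clinear :: "('a::complex_inner \<Rightarrow> 'a) \<Rightarrow> bool" where
  "clinear T \<longleftrightarrow> (\<forall>x y. T (x + y) = T x + T y) \<and> (\<forall>c x. T (scaleC c x) = scaleC c (T x))"

lemma clinear_add: "clinear T \<Longrightarrow> T (x + y) = T x + T y"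
  by (simp add: clinear_def)

lemma clinear_scaleC: "clinear T \<Longrightarrow> T (scaleC c x) = scaleC c (T x)"
  by (simp add: clinear_def)

lemma clinear_diff: "clinear T \<Longrightarrow> T (x - y) = T x - T y"
  by (metis clinear_add diff_add_cancel add_diff_cancel_right')

lemma bounded_clinear_imp_clinear: "bounded_clinear T \<Longrightarrow> clinear T"
  by (simp add: bounded_clinear_def clinear_def)

lemma clinear_add_fun: "clinear Q \<Longrightarrow> clinear R \<Longrightarrow> clinear (\<lambda>x. Q x + R x)"
  by (simp add: clinear_def scaleC_add_right algebra_simps)

lemma clinear_diff_fun: "clinear Q \<Longrightarrow> clinear R \<Longrightarrow> clinear (\<lambda>x. Q x - R x)"
  by (simp add: clinear_def scaleC_diff_right algebra_simps)

lemma nonneg_quadratic_imp_discriminant_le: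
  fixes p n r :: real
  assumes nonneg: "\<And>t. 0 \<le> p - 2 * t * n + t\<^sup>2 * n * r" and "0 \<le> r"
  shows "n \<le> p * r"
proof (cases "r = 0")
  case True
  have "0 \<le> p - 2 * ((p + 1) / (2 * n)) * n" using nonneg[of "(p + 1) / (2 * n)"] True by simp
  then show ?thesis using True by (cases "n = 0") (auto simp: field_simps split: if_splits)
next
  case False
  with \<open>0 \<le> r\<close> have "r > 0" by simp
  have "0 \<le> p - 2 * (1 / r) * n + (1 / r)\<^sup>2 * n * r" by (rule nonneg)
  also have "\<dots> = (p * r - n) / r" using \<open>r > 0\<close> by (simp add: field_simps power2_eq_square)
  finally show ?thesis using \<open>r > 0\<close> by (simp add: zero_le_divide_iff)
qed

lemma omega_AA_le:
  assumes "\<exists>x. AA_norm A x = 1"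
    and "\<And>x. AA_norm A x = 1 \<Longrightarrow> cmod (AA_inner A (T x) x) \<le> c"
  shows "omega_AA A T \<le> c"
  unfolding omega_AA_def using assms by (intro cSup_least) auto

definition A_numerically_bounded :: "('a::complex_inner \<Rightarrow> 'a) \<Rightarrow> ('a \<Rightarrow> 'a) \<Rightarrow> bool" where
  "A_numerically_bounded A T \<longleftrightarrow>
     clinear T \<and> (\<exists>c. \<forall>x. cmod (A_inner A (T x) x) \<le> c * (A_norm A x)\<^sup>2)"

context
  fixes A :: "'a::complex_inner \<Rightarrow> 'a"
  assumes pos: "positive_op A"
begin

lemma clinear_A: "clinear A"
  using pos by (simp add: positive_op_def bounded_clinear_imp_clinear)

lemma A_inner_add_left: "A_inner A (x + y) z = A_inner A x z + A_inner A y z"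
  by (simp add: A_inner_def clinear_add[OF clinear_A] cinner_add_left)

lemma A_inner_diff_left: "A_inner A (x - y) z = A_inner A x z - A_inner A y z"
  by (simp add: A_inner_def clinear_diff[OF clinear_A] cinner_diff_left)

lemma A_inner_scaleC_left: "A_inner A (scaleC a x) z = a * A_inner A x z"
  by (simp add: A_inner_def clinear_scaleC[OF clinear_A] cinner_scaleC_left)

lemma A_inner_add_right: "A_inner A x (y + z) = A_inner A x y + A_inner A x z"
  by (simp add: A_inner_def cinner_add_right)

lemma A_inner_diff_right: "A_inner A x (y - z) = A_inner A x y - A_inner A x z"
  by (simp add: A_inner_def cinner_diff_right)

lemma A_inner_scaleC_right: "A_inner A x (scaleC a z) = cnj a * A_inner A x z"
  by (simp add: A_inner_def cinner_scaleC_right)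

lemmas A_inner_simps = A_inner_add_left A_inner_diff_left A_inner_scaleC_left
  A_inner_add_right A_inner_diff_right A_inner_scaleC_right

lemma A_inner_zero_left [simp]: "A_inner A 0 z = 0"
  using A_inner_add_left[of 0 0 z] by simp

lemma A_norm_sq: "(A_norm A x)\<^sup>2 = Re (A_inner A x x)"
  using pos by (simp add: A_norm_def A_inner_def positive_op_def)

lemma A_norm_zero [simp]: "A_norm A 0 = 0"
  by (simp add: A_norm_def)

lemma A_norm_nonneg [simp]: "0 \<le> A_norm A x"
  using pos by (simp add: A_norm_def A_inner_def positive_op_def)

lemma A_inner_self: "A_inner A x x = complex_of_real ((A_norm A x)\<^sup>2)"
  using pos by (simp add: A_norm_sq complex_eq_iff A_inner_def positive_op_def)

lemma A_inner_self_Im: "Im (A_inner A x x) = 0"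
  by (simp add: A_inner_self)

text \<open>Positivity makes the form Hermitian: compare the quadratic form at \<open>x + y\<close> and \<open>x + \<i> y\<close>.\<close>
lemma A_inner_commute: "A_inner A y x = cnj (A_inner A x y)"
  using A_inner_self_Im[of "x + y"] A_inner_self_Im[of "x + scaleC \<i> y"]
  by (simp add: A_inner_simps A_inner_self_Im complex_eq_iff)

lemma A_inner_Cauchy_Schwarz: "cmod (A_inner A x y) \<le> A_norm A x * A_norm A y"
proof -
  define a where "a = A_inner A x y"
  have "0 \<le> (A_norm A x)\<^sup>2 - 2 * t * (cmod a)\<^sup>2 + t\<^sup>2 * (cmod a)\<^sup>2 * (A_norm A y)\<^sup>2" for t :: real
  proof -
    define z where "z = x - scaleC (complex_of_real t * a) y"
    have "A_inner A z z = complex_of_real ((A_norm A x)\<^sup>2) - complex_of_real (2 * t) * (a * cnj a)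
        + complex_of_real (t\<^sup>2) * (a * cnj a) * complex_of_real ((A_norm A y)\<^sup>2)"
      unfolding z_def
      by (simp add: A_inner_simps A_inner_self[of x] A_inner_self[of y] A_inner_commute[of y x]
          a_def[symmetric] algebra_simps power2_eq_square)
    also have "\<dots> = complex_of_real
        ((A_norm A x)\<^sup>2 - 2 * t * (cmod a)\<^sup>2 + t\<^sup>2 * (cmod a)\<^sup>2 * (A_norm A y)\<^sup>2)"
      by (simp flip: complex_norm_square)
    finally show ?thesis by (metis A_norm_sq Re_complex_of_real zero_le_power2)
  qed
  then have "(cmod a)\<^sup>2 \<le> (A_norm A x)\<^sup>2 * (A_norm A y)\<^sup>2"
    by (rule nonneg_quadratic_imp_discriminant_le) simp
  then show ?thesis
    unfolding a_def power_mult_distrib[symmetric] by (rule power2_le_imp_le) simp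
qed

lemma A_norm_scaleC: "A_norm A (scaleC c x) = cmod c * A_norm A x"
proof -
  have "A_inner A (scaleC c x) (scaleC c x) = complex_of_real ((cmod c)\<^sup>2) * A_inner A x x"
    unfolding complex_norm_square by (simp add: A_inner_simps mult.assoc)
  then have "(A_norm A (scaleC c x))\<^sup>2 = (cmod c * A_norm A x)\<^sup>2"
    unfolding power_mult_distrib A_norm_sq by simp
  then show ?thesis by (rule power2_eq_imp_eq) simp_all
qed

lemma A_norm_parallelogram:
  "(A_norm A (x + y))\<^sup>2 + (A_norm A (x - y))\<^sup>2 = 2 * ((A_norm A x)\<^sup>2 + (A_norm A y)\<^sup>2)"
  by (simp add: A_norm_sq A_inner_simps)

lemma exists_A_norm_eq_1:
  assumes "A \<noteq> (\<lambda>x. 0)"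
  shows "\<exists>x. A_norm A x = 1"
proof -
  obtain z where "A z \<noteq> 0" using assms by auto
  then have "A_inner A z (A z) \<noteq> 0" by (simp add: A_inner_def cinner_self_eq_zero)
  then have "A_norm A z \<noteq> 0" using A_inner_Cauchy_Schwarz[of z "A z"] by auto
  then have "A_norm A (scaleC (complex_of_real (1 / A_norm A z)) z) = 1"
    by (simp add: A_norm_scaleC norm_divide)
  then show ?thesis ..
qed

lemma B_A_half_imp_A_numerically_bounded:
  assumes "T \<in> B_A_half A"
  shows "A_numerically_bounded A T"
proof -
  obtain c where "bounded_clinear T" and c: "\<And>x. A_norm A (T x) \<le> c * A_norm A x"
    using assms by (auto simp: B_A_half_def)
  have "cmod (A_inner A (T x) x) \<le> c * (A_norm A x)\<^sup>2" for x
  proof -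
    have "cmod (A_inner A (T x) x) \<le> A_norm A (T x) * A_norm A x"
      by (rule A_inner_Cauchy_Schwarz)
    also have "\<dots> \<le> c * A_norm A x * A_norm A x"
      by (intro mult_right_mono c) simp
    finally show ?thesis by (simp add: power2_eq_square mult.assoc)
  qed
  then show ?thesis
    using \<open>bounded_clinear T\<close> by (auto simp: A_numerically_bounded_def bounded_clinear_imp_clinear)
qed

lemma A_numerically_bounded_add:
  assumes "A_numerically_bounded A Q" "A_numerically_bounded A R"
  shows "A_numerically_bounded A (\<lambda>x. Q x + R x)"
proof -
  obtain c d where c: "\<And>x. cmod (A_inner A (Q x) x) \<le> c * (A_norm A x)\<^sup>2"
    and d: "\<And>x. cmod (A_inner A (R x) x) \<le> d * (A_norm A x)\<^sup>2"
    using assms by (auto simp: A_numerically_bounded_def)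
  have "cmod (A_inner A (Q x + R x) x) \<le> (c + d) * (A_norm A x)\<^sup>2" for x
    using norm_triangle_ineq[of "A_inner A (Q x) x" "A_inner A (R x) x"] c[of x] d[of x]
    by (simp add: A_inner_simps algebra_simps)
  then show ?thesis
    using assms by (auto simp: A_numerically_bounded_def clinear_add_fun)
qed

lemma A_numerically_bounded_diff:
  assumes "A_numerically_bounded A Q" "A_numerically_bounded A R"
  shows "A_numerically_bounded A (\<lambda>x. Q x - R x)"
proof -
  obtain c d where c: "\<And>x. cmod (A_inner A (Q x) x) \<le> c * (A_norm A x)\<^sup>2"
    and d: "\<And>x. cmod (A_inner A (R x) x) \<le> d * (A_norm A x)\<^sup>2"
    using assms by (auto simp: A_numerically_bounded_def)
  have "cmod (A_inner A (Q x - R x) x) \<le> (c + d) * (A_norm A x)\<^sup>2" for x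
    using norm_triangle_ineq4[of "A_inner A (Q x) x" "A_inner A (R x) x"] c[of x] d[of x]
    by (simp add: A_inner_simps algebra_simps)
  then show ?thesis
    using assms by (auto simp: A_numerically_bounded_def clinear_diff_fun)
qed

lemma A_numerically_bounded_imp_clinear: "A_numerically_bounded A T \<Longrightarrow> clinear T"
  by (simp add: A_numerically_bounded_def)

lemma A_inner_le_omega_A:
  assumes "A_numerically_bounded A T"
  shows "cmod (A_inner A (T x) x) \<le> omega_A A T * (A_norm A x)\<^sup>2"
proof -
  obtain c where lin: "clinear T" and c: "\<And>x. cmod (A_inner A (T x) x) \<le> c * (A_norm A x)\<^sup>2"
    using assms by (auto simp: A_numerically_bounded_def)
  show ?thesis
  proof (cases "A_norm A x = 0")
    case True
    then show ?thesis using c[of x] by simp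
  next
    case False
    define s where "s = A_norm A x"
    define y where "y = scaleC (complex_of_real (1 / s)) x"
    have unit_bound: "cmod (A_inner A (T y) y) \<le> omega_A A T"
    proof -
      have c_unit: "A_norm A x = 1 \<Longrightarrow> cmod (A_inner A (T x) x) \<le> c" for x
        using c[of x] by simp
      have bdd: "bdd_above {cmod (A_inner A (T x) x) | x. A_norm A x = 1}"
        by (intro bdd_aboveI[where M = c]) (clarify, erule c_unit)
      have "A_norm A y = 1"
        using False by (simp add: y_def s_def A_norm_scaleC norm_divide)
      then have "cmod (A_inner A (T y) y) \<in> {cmod (A_inner A (T x) x) | x. A_norm A x = 1}"
        by (intro CollectI exI[of _ y]) simp
      then show ?thesis
        unfolding omega_A_def by (rule cSup_upper[OF _ bdd])
    qed
    have "scaleC (complex_of_real s) y = x"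
      using False by (simp add: y_def s_def scaleC_scaleC scaleC_one)
    moreover have "A_inner A (T (scaleC (complex_of_real s) y)) (scaleC (complex_of_real s) y)
        = complex_of_real (s\<^sup>2) * A_inner A (T y) y"
      by (simp add: clinear_scaleC[OF lin] A_inner_simps power2_eq_square)
    ultimately have "cmod (A_inner A (T x) x) = s\<^sup>2 * cmod (A_inner A (T y) y)"
      by (simp add: norm_mult norm_power)
    also have "\<dots> \<le> s\<^sup>2 * omega_A A T"
      by (rule mult_left_mono[OF unit_bound]) simp
    finally show ?thesis unfolding s_def by (simp only: mult.commute)
  qed
qed

lemma A_inner_off_diagonal_polarization:
  fixes Q R :: "'a \<Rightarrow> 'a"
  defines "B \<equiv> \<lambda>x. Q x + R x" and "C \<equiv> \<lambda>x. Q x - R x"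
  assumes Q: "clinear Q" and R: "clinear R"
  shows "4 * (A_inner A (Q v) u + A_inner A (R u) v)
    = A_inner A (B (u + v)) (u + v) - A_inner A (B (u - v)) (u - v)
      - \<i> * (A_inner A (C (u + scaleC \<i> v)) (u + scaleC \<i> v)
             - A_inner A (C (u - scaleC \<i> v)) (u - scaleC \<i> v))"
  unfolding B_def C_def
  by (simp add: clinear_add[OF Q] clinear_add[OF R] clinear_diff[OF Q] clinear_diff[OF R]
      clinear_scaleC[OF Q] clinear_scaleC[OF R] A_inner_simps algebra_simps)

lemma A_inner_off_diagonal_le:
  assumes Q: "A_numerically_bounded A Q" and R: "A_numerically_bounded A R"
  shows "cmod (A_inner A (Q v) u + A_inner A (R u) v)
    \<le> (omega_A A (\<lambda>x. Q x + R x) + omega_A A (\<lambda>x. Q x - R x)) / 2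
       * ((A_norm A u)\<^sup>2 + (A_norm A v)\<^sup>2)"
proof -
  define B where "B = (\<lambda>x. Q x + R x)"
  define C where "C = (\<lambda>x. Q x - R x)"
  have B: "A_numerically_bounded A B" and C: "A_numerically_bounded A C"
    unfolding B_def C_def using A_numerically_bounded_add[OF Q R] A_numerically_bounded_diff[OF Q R] .
  let ?form = "\<lambda>T w. cmod (A_inner A (T w) w)"
  let ?iv = "scaleC \<i> v"
  have "4 * cmod (A_inner A (Q v) u + A_inner A (R u) v)
      \<le> ?form B (u + v) + ?form B (u - v) + (?form C (u + ?iv) + ?form C (u - ?iv))"
  proof -
    have "4 * cmod (A_inner A (Q v) u + A_inner A (R u) v)
        = cmod (4 * (A_inner A (Q v) u + A_inner A (R u) v))"
      by (subst norm_mult) simp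
    also have "\<dots> \<le> cmod (A_inner A (B (u + v)) (u + v) - A_inner A (B (u - v)) (u - v))
        + cmod (\<i> * (A_inner A (C (u + ?iv)) (u + ?iv) - A_inner A (C (u - ?iv)) (u - ?iv)))"
      unfolding A_inner_off_diagonal_polarization[OF Q[THEN A_numerically_bounded_imp_clinear]
          R[THEN A_numerically_bounded_imp_clinear]]
        B_def C_def
      by (rule norm_triangle_ineq4)
    also have "\<dots> \<le> ?form B (u + v) + ?form B (u - v) + (?form C (u + ?iv) + ?form C (u - ?iv))"
      by (intro add_mono norm_triangle_ineq4) (simp add: norm_mult norm_triangle_ineq4)
    finally show ?thesis .
  qed
  also have "\<dots> \<le> omega_A A B * ((A_norm A (u + v))\<^sup>2 + (A_norm A (u - v))\<^sup>2)
      + omega_A A C * ((A_norm A (u + ?iv))\<^sup>2 + (A_norm A (u - ?iv))\<^sup>2)"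
    unfolding distrib_left by (intro add_mono A_inner_le_omega_A B C)
  also have "\<dots> = 2 * (omega_A A B + omega_A A C) * ((A_norm A u)\<^sup>2 + (A_norm A v)\<^sup>2)"
    unfolding A_norm_parallelogram by (simp add: A_norm_scaleC algebra_simps)
  finally show ?thesis
    by (simp add: B_def C_def field_simps)
qed

lemma AA_inner_block_op:
  "AA_inner A (block_op P Q R S (u, v)) (u, v)
    = A_inner A (P u) u + A_inner A (S v) v + (A_inner A (Q v) u + A_inner A (R u) v)"
  by (simp add: AA_inner_def block_op_def A_inner_add_left)

lemma AA_norm_Pair: "AA_norm A (u, v) = sqrt ((A_norm A u)\<^sup>2 + (A_norm A v)\<^sup>2)"
  by (simp add: AA_norm_def AA_inner_def A_norm_sq)

lemma AA_inner_block_op_le: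
  assumes "A_numerically_bounded A P" "A_numerically_bounded A Q"
    and "A_numerically_bounded A R" "A_numerically_bounded A S"
  shows "cmod (AA_inner A (block_op P Q R S (u, v)) (u, v))
    \<le> (max (omega_A A P) (omega_A A S)
        + (omega_A A (\<lambda>x. Q x + R x) + omega_A A (\<lambda>x. Q x - R x)) / 2) * (AA_norm A (u, v))\<^sup>2"
proof -
  let ?m = "max (omega_A A P) (omega_A A S)"
  have "cmod (AA_inner A (block_op P Q R S (u, v)) (u, v))
      \<le> cmod (A_inner A (P u) u) + cmod (A_inner A (S v) v) + cmod (A_inner A (Q v) u + A_inner A (R u) v)"
    unfolding AA_inner_block_op by (intro norm_triangle_le add_mono norm_triangle_ineq order_refl)
  also have "\<dots> \<le> omega_A A P * (A_norm A u)\<^sup>2 + omega_A A S * (A_norm A v)\<^sup>2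
      + (omega_A A (\<lambda>x. Q x + R x) + omega_A A (\<lambda>x. Q x - R x)) / 2
        * ((A_norm A u)\<^sup>2 + (A_norm A v)\<^sup>2)"
    using assms by (intro add_mono A_inner_le_omega_A A_inner_off_diagonal_le)
  also have "omega_A A P * (A_norm A u)\<^sup>2 + omega_A A S * (A_norm A v)\<^sup>2
      \<le> ?m * ((A_norm A u)\<^sup>2 + (A_norm A v)\<^sup>2)"
    unfolding distrib_left by (intro add_mono mult_right_mono) simp_all
  finally show ?thesis
    by (simp add: AA_norm_Pair algebra_simps)
qed

end

theorem theorem2p7:
  fixes A P Q R S :: "'a::{complex_inner, complete_space} \<Rightarrow> 'a"
  assumes "positive_op A" and "A \<noteq> (\<lambda>x. 0)"
    and "P \<in> B_A_half A" and "Q \<in> B_A_half A" and "R \<in> B_A_half A" and "S \<in> B_A_half A"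
  shows "omega_AA A (block_op P Q R S)
     \<le> max (omega_A A P) (omega_A A S)
        + (omega_A A (\<lambda>x. Q x + R x) + omega_A A (\<lambda>x. Q x - R x)) / 2"
proof -
  obtain y where "A_norm A y = 1"
    using exists_A_norm_eq_1[OF assms(1,2)] ..
  then have "AA_norm A (y, 0) = 1"
    by (simp add: AA_norm_Pair[OF assms(1)] A_norm_zero[OF assms(1)])
  note bounded = assms(3-6)[THEN B_A_half_imp_A_numerically_bounded[OF assms(1)]]
  show ?thesis
  proof (rule omega_AA_le)
    show "\<exists>x. AA_norm A x = 1"
      using \<open>AA_norm A (y, 0) = 1\<close> ..
    fix x :: "'a \<times> 'a"
    assume "AA_norm A x = 1"
    then show "cmod (AA_inner A (block_op P Q R S x) x) \<le> max (omega_A A P) (omega_A A S)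
        + (omega_A A (\<lambda>x. Q x + R x) + omega_A A (\<lambda>x. Q x - R x)) / 2"
      using AA_inner_block_op_le[OF assms(1) bounded, of "fst x" "snd x"] by simp
  qed
qed

end
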